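(* Consider, for $i=1,2$, $a\in[0,A]$, $t\ge 0$, the age-structured predator–prey system $$\partial_t x_1(a,t)+\partial_a x_1(a,t)=-x_1(a,t)\Big[\mu_1(a)+u(t)+\int_0^A g_1(\alpha)x_2(\alpha,t)\,d\alpha\Big],$$ $$\partial_t x_2(a,t)+\partial_a x_2(a,t)=-x_2(a,t)\Big[\mu_2(a)+u(t)+\frac{1}{\int_0^A g_2(\alpha)x_1(\alpha,t)\,d\alpha}\Big],$$ $$x_i(0,t)=\int_0^A k_i(a)x_i(a,t)\,da .$$ Let $u^*\in(0,\min\{\zeta_1,\zeta_2\})$. Then the system admits, with constant input $u\equiv u^*$, a time-independent solution $(x_1^*,x_2^* )$ with positive values, given by $$x_i^*(a)=x_i^*(0)\,\tilde x_i^*(a),\qquad \tilde x_i^*(a)=e^{-\int_0^a(\zeta_i+\mu_i(s))ds},$$ $$x_1^*(0)=\frac{1}{(\zeta_2-u^* )\int_0^A g_2(a)\tilde x_1^*(a)\,da}>0,\qquad x_2^*(0)=\frac{\zeta_1-u^*}{\int_0^A g_1(a)\tilde x_2^*(a)\,da}>0,$$ and these satisfy $u^*=\zeta_1-\lambda_2=\zeta_2-\frac1{\lambda_1}$, where $\lambda_1:=\int_0^A g_2(a)x_1^*(a)\,da>0$ and $\lambda_2:=\int_0^A g_1(a)x_2^*(a)\,da>0$. Conversely, every time-independent solution $(x_1^*,x_2^* )$ with positive values corresponding to a constant input $u^*>0$ is of this form, and necessarily $u^*\in(0,\min\{\zeta_1,\zeta_2\})$.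
   Context: $A>0$ is the maximal age. For $i=1,2$, $\mu_i,k_i,g_i:[0,A]\to[0,\infty)$ are (piecewise continuous) functions with $\int_0^A\mu_i>0$, $\int_0^A k_i>0$, $\int_0^A g_i>0$ (mortality, birth and interaction kernels). $\zeta_i\in\mathbb R$ denotes the unique real number satisfying the Lotka–Sharpe condition $\int_0^A k_i(a)e^{-\int_0^a(\mu_i(s)+\zeta_i)ds}\,da=1$. *)

theory Defs
  imports "HOL-Analysis.Analysis"
begin

definition piecewise_cont :: "real \<Rightarrow> (real \<Rightarrow> real) \<Rightarrow> bool" where
  "piecewise_cont A f \<longleftrightarrow>
     (\<exists>S. finite S \<and>
        (\<forall>a\<in>{0..A} - S. continuous (at a within {0..A}) f) \<and>
        (\<forall>a\<in>S \<inter> {0..A}.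
           (a > 0 \<longrightarrow> (\<exists>l. (f \<longlongrightarrow> l) (at_left a))) \<and>
           (a < A \<longrightarrow> (\<exists>l. (f \<longlongrightarrow> l) (at_right a)))))"

text \<open>Time-independent solution (x1,x2) of the age-structured predator-prey system
  with constant input u: since the time derivative vanishes, the PDEs reduce to
  ODEs in the age variable a, which must hold at all but finitely many ages
  (the coefficients are only piecewise continuous); x1, x2 are continuous on [0,A]
  and satisfy the renewal boundary conditions.\<close>
definition steady_state ::
  "real \<Rightarrow> (real \<Rightarrow> real) \<Rightarrow> (real \<Rightarrow> real) \<Rightarrow> (real \<Rightarrow> real) \<Rightarrow> (real \<Rightarrow> real)
   \<Rightarrow> (real \<Rightarrow> real) \<Rightarrow> (real \<Rightarrow> real) \<Rightarrow> real \<Rightarrow> (real \<Rightarrow> real) \<Rightarrow> (real \<Rightarrow> real) \<Rightarrow> bool"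
  where
  "steady_state A \<mu>1 \<mu>2 k1 k2 g1 g2 u x1 x2 \<longleftrightarrow>
     continuous_on {0..A} x1 \<and> continuous_on {0..A} x2 \<and>
     (\<exists>S. finite S \<and>
        (\<forall>a\<in>{0..A} - S.
           (x1 has_real_derivative
              (- x1 a * (\<mu>1 a + u + integral {0..A} (\<lambda>\<alpha>. g1 \<alpha> * x2 \<alpha>)))) (at a within {0..A}) \<and>
           (x2 has_real_derivative
              (- x2 a * (\<mu>2 a + u + 1 / integral {0..A} (\<lambda>\<alpha>. g2 \<alpha> * x1 \<alpha>)))) (at a within {0..A}))) \<and>
     x1 0 = integral {0..A} (\<lambda>a. k1 a * x1 a) \<and>
     x2 0 = integral {0..A} (\<lambda>a. k2 a * x2 a)"

definition profile :: "(real \<Rightarrow> real) \<Rightarrow> real \<Rightarrow> real \<Rightarrow> real" where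
  "profile \<mu> \<zeta> a = exp (- integral {0..a} (\<lambda>s. \<zeta> + \<mu> s))"

end

theory Submission
  imports Defs
begin

text \<open>For a constant input the steady-state equations decouple into two scalar renewal
  problems: species \<open>i\<close> solves \<open>x' = -x (\<mu>\<^sub>i + c\<^sub>i)\<close> with \<open>x(0) = \<integral> k\<^sub>i x\<close>, where the
  effective rate \<open>c\<^sub>i\<close> is \<open>u + \<lambda>\<^sub>2\<close> resp. \<open>u + 1/\<lambda>\<^sub>1\<close>. The ODE forces \<open>x = x(0) \<cdot> profile \<mu>\<^sub>i c\<^sub>i\<close>,
  and as \<open>\<integral> k\<^sub>i \<cdot> profile \<mu>\<^sub>i c\<close> is strictly decreasing in \<open>c\<close>, a positive solution of the
  renewal condition exists exactly for \<open>c\<^sub>i = \<zeta>\<^sub>i\<close>. The two equations \<open>u + \<lambda>\<^sub>2 = \<zeta>\<^sub>1\<close>,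
  \<open>u + 1/\<lambda>\<^sub>1 = \<zeta>\<^sub>2\<close> with \<open>\<lambda>\<^sub>i > 0\<close> then determine the amplitudes and force \<open>u < min \<zeta>\<^sub>1 \<zeta>\<^sub>2\<close>.\<close>

lemma integrable_of_integral_pos: "integral S f > (0::real) \<Longrightarrow> f integrable_on S"
  using not_integrable_integral by fastforce

lemma integrable_nonneg_times_continuous:
  fixes k h :: "real \<Rightarrow> real"
  assumes "k integrable_on {a..b}" "\<And>x. x \<in> {a..b} \<Longrightarrow> k x \<ge> 0" "continuous_on {a..b} h"
  shows "(\<lambda>x. k x * h x) integrable_on {a..b}"
proof -
  have "k absolutely_integrable_on {a..b}"
    using assms(1,2) by (intro absolutely_integrable_onI assms(1) integrable_eq[OF assms(1)]) auto
  then have "(\<lambda>x. h x * k x) absolutely_integrable_on {a..b}"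
    by (intro absolutely_integrable_bounded_measurable_product_real
        continuous_imp_measurable_on_sets_lebesgue[OF assms(3)])
       (auto intro: compact_imp_bounded compact_continuous_image assms(3))
  then show ?thesis
    unfolding absolutely_integrable_on_def by (simp add: mult.commute)
qed

lemma negligible_nonzero_if_nonneg_integral_eq_0:
  fixes f :: "'a::euclidean_space \<Rightarrow> real"
  assumes "f integrable_on S" "\<And>x. x \<in> S \<Longrightarrow> 0 \<le> f x" "integral S f = 0" "S \<in> sets lebesgue"
  shows "negligible {x\<in>S. f x \<noteq> 0}"
proof -
  have f: "f absolutely_integrable_on S"
    using assms(1,2) by (intro absolutely_integrable_onI assms(1) integrable_eq[OF assms(1)]) simp
  then have "integral\<^sup>L lebesgue (\<lambda>x. indicator S x *\<^sub>R f x) = 0"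
    using assms(3) set_lebesgue_integral_eq_integral(2)[OF f]
    unfolding set_lebesgue_integral_def by simp
  moreover have "integrable lebesgue (\<lambda>x. indicator S x *\<^sub>R f x)"
    using f by (simp add: set_integrable_def)
  ultimately have "AE x in lebesgue. indicator S x *\<^sub>R f x = 0"
    using assms(2) by (subst (asm) integral_nonneg_eq_0_iff_AE) (auto simp: indicator_def)
  then obtain N where N: "{x \<in> space lebesgue. indicator S x *\<^sub>R f x \<noteq> 0} \<subseteq> N"
    "emeasure lebesgue N = 0" "N \<in> sets lebesgue"
    by (rule AE_E)
  then have "negligible N" by (auto simp: negligible_iff_null_sets)
  moreover have "{x\<in>S. f x \<noteq> 0} \<subseteq> N" using N(1) by (auto simp: indicator_def)
  ultimately show ?thesis by (rule negligible_subset)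
qed

lemma integral_nonneg_times_continuous_pos:
  fixes k w :: "real \<Rightarrow> real"
  assumes "k integrable_on {a..b}" "\<And>x. x \<in> {a..b} \<Longrightarrow> k x \<ge> 0" "integral {a..b} k > 0"
    and "continuous_on {a..b} w" "\<And>x. x \<in> {a..b} \<Longrightarrow> w x \<ge> 0"
    and "negligible N" "\<And>x. x \<in> {a..b} - N \<Longrightarrow> w x > 0"
  shows "integral {a..b} (\<lambda>x. k x * w x) > 0"
proof (rule ccontr)
  have int: "(\<lambda>x. k x * w x) integrable_on {a..b}"
    by (rule integrable_nonneg_times_continuous[OF assms(1,2,4)])
  assume "\<not> ?thesis"
  moreover have "integral {a..b} (\<lambda>x. k x * w x) \<ge> 0"
    using assms(2,5) by (intro integral_nonneg int) auto
  ultimately have "integral {a..b} (\<lambda>x. k x * w x) = 0" by simp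
  with int assms(2,5) have "negligible {x\<in>{a..b}. k x * w x \<noteq> 0}"
    by (intro negligible_nonzero_if_nonneg_integral_eq_0) auto
  with assms(6) have "negligible ({x\<in>{a..b}. k x * w x \<noteq> 0} \<union> N)" by simp
  then have "integral {a..b} k = integral {a..b} (\<lambda>_. 0::real)"
    by (rule integral_spike) (use assms(7) in fastforce)
  with assms(3) show False by simp
qed

lemma profile_pos: "profile \<mu> c a > 0"
  by (simp add: profile_def)

lemma profile_at_0 [simp]: "profile \<mu> c 0 = 1"
  by (simp add: profile_def)

lemma profile_eq_exp_mult:
  assumes "\<mu> integrable_on {0..A}" "a \<in> {0..A}"
  shows "profile \<mu> c a = exp (- c * a) * exp (- integral {0..a} \<mu>)"
proof -
  have "\<mu> integrable_on {0..a}"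
    using assms integrable_subinterval_real by fastforce
  then have "integral {0..a} (\<lambda>s. c + \<mu> s) = c * a + integral {0..a} \<mu>"
    using assms(2) by (simp add: integral_add integrable_const_ivl)
  then show ?thesis
    unfolding profile_def by (simp add: exp_add[symmetric])
qed

lemma continuous_on_profile:
  assumes "\<mu> integrable_on {0..A}"
  shows "continuous_on {0..A} (profile \<mu> c)"
proof -
  have "(\<lambda>s. c + \<mu> s) integrable_on {0..A}"
    using assms by (intro integrable_add integrable_const_ivl)
  from indefinite_integral_continuous_1[OF this] show ?thesis
    unfolding profile_def[abs_def] by (intro continuous_intros)
qed

lemma has_real_derivative_profile:
  assumes "\<mu> integrable_on {0..A}" "a \<in> {0..A}" "continuous (at a within {0..A}) \<mu>"
  shows "(profile \<mu> c has_real_derivative - profile \<mu> c a * (\<mu> a + c)) (at a within {0..A})"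
proof -
  have "(\<lambda>s. c + \<mu> s) integrable_on {0..A}"
    using assms(1) by (intro integrable_add integrable_const_ivl)
  moreover have "continuous (at a within {0..A} - {}) (\<lambda>s. c + \<mu> s)"
    using assms(3) by (simp add: continuous_intros)
  ultimately have "((\<lambda>b. integral {0..b} (\<lambda>s. c + \<mu> s)) has_vector_derivative c + \<mu> a) (at a within {0..A})"
    using integral_has_vector_derivative_continuous_at[of _ 0 A a "{}"] assms(2) by simp
  then have "((\<lambda>b. integral {0..b} (\<lambda>s. c + \<mu> s)) has_real_derivative c + \<mu> a) (at a within {0..A})"
    by (simp add: has_real_derivative_iff_has_vector_derivative)
  from DERIV_chain2[OF DERIV_exp DERIV_minus[OF this]] show ?thesis
    unfolding profile_def[abs_def] by (simp add: algebra_simps)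
qed

text \<open>Dividing by the profile turns the ODE into \<open>(x / profile \<mu> c)' = 0\<close>.\<close>
lemma linear_ode_solution_eq_profile:
  assumes "\<mu> integrable_on {0..A}" "finite S" "\<And>a. a \<in> {0..A} - S \<Longrightarrow> continuous (at a within {0..A}) \<mu>"
    and "continuous_on {0..A} x" "finite T"
    and "\<And>a. a \<in> {0..A} - T \<Longrightarrow> (x has_real_derivative - x a * (\<mu> a + c)) (at a within {0..A})"
    and "b \<in> {0..A}"
  shows "x b = x 0 * profile \<mu> c b"
proof -
  let ?h = "\<lambda>a. x a / profile \<mu> c a"
  have nz: "profile \<mu> c a \<noteq> 0" for a
    using profile_pos by (rule less_imp_neq[symmetric])
  have "?h b = x 0"
  proof (rule has_derivative_zero_unique_strong_interval[of "S \<union> T" 0 A ?h "x 0" b])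
    show "continuous_on {0..A} ?h"
      using nz by (intro continuous_on_divide assms(4) continuous_on_profile assms(1)) auto
  next
    fix a assume a: "a \<in> {0..A} - (S \<union> T)"
    have "(?h has_real_derivative
        (- x a * (\<mu> a + c) * profile \<mu> c a - x a * (- profile \<mu> c a * (\<mu> a + c)))
          / (profile \<mu> c a * profile \<mu> c a)) (at a within {0..A})"
      using a nz by (intro DERIV_divide assms(6) has_real_derivative_profile assms(1,3)) auto
    then have "(?h has_real_derivative 0) (at a within {0..A})"
      by (simp add: algebra_simps)
    moreover have "(*) 0 = (\<lambda>_::real. 0::real)" by auto
    ultimately show "(?h has_derivative (\<lambda>_. 0)) (at a within {0..A})"
      by (simp add: has_field_derivative_def)
  qed (use assms(2,5,7) in auto)
  then show ?thesis using nz[of b] by (simp add: field_simps)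
qed

lemma integral_profile_strict_antimono:
  fixes k \<mu> :: "real \<Rightarrow> real"
  assumes "k integrable_on {0..A}" "\<And>a. a \<in> {0..A} \<Longrightarrow> k a \<ge> 0" "integral {0..A} k > 0"
    and "\<mu> integrable_on {0..A}" "c < d"
  shows "integral {0..A} (\<lambda>a. k a * profile \<mu> d a) < integral {0..A} (\<lambda>a. k a * profile \<mu> c a)"
proof -
  let ?w = "\<lambda>a. profile \<mu> c a - profile \<mu> d a"
  have w_pos: "?w a > 0" if "a \<in> {0..A} - {0}" for a
  proof -
    have "exp (- d * a) < exp (- c * a)" using that \<open>c < d\<close> by simp
    then show ?thesis using that profile_eq_exp_mult[OF assms(4)] by simp
  qed
  have "integral {0..A} (\<lambda>a. k a * ?w a) > 0"
  proof (rule integral_nonneg_times_continuous_pos[OF assms(1-3) _ _ negligible_sing w_pos])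
    show "?w a \<ge> 0" if "a \<in> {0..A}" for a
      using that w_pos[of a] by (cases "a = 0") (auto simp: less_imp_le)
    show "continuous_on {0..A} ?w"
      by (intro continuous_on_diff continuous_on_profile assms(4))
  qed
  moreover have "(\<lambda>a. k a * profile \<mu> e a) integrable_on {0..A}" for e
    by (intro integrable_nonneg_times_continuous assms continuous_on_profile)
  then have "integral {0..A} (\<lambda>a. k a * ?w a)
      = integral {0..A} (\<lambda>a. k a * profile \<mu> c a) - integral {0..A} (\<lambda>a. k a * profile \<mu> d a)"
    by (simp add: right_diff_distrib integral_diff)
  ultimately show ?thesis by simp
qed

lemma integral_profile_inj:
  fixes k \<mu> :: "real \<Rightarrow> real"
  assumes "k integrable_on {0..A}" "\<And>a. a \<in> {0..A} \<Longrightarrow> k a \<ge> 0" "integral {0..A} k > 0"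
    and "\<mu> integrable_on {0..A}"
    and "integral {0..A} (\<lambda>a. k a * profile \<mu> c a) = integral {0..A} (\<lambda>a. k a * profile \<mu> d a)"
  shows "c = d"
  using integral_profile_strict_antimono[OF assms(1-4), of c d]
    integral_profile_strict_antimono[OF assms(1-4), of d c] assms(5)
  by (cases c d rule: linorder_cases) auto

lemma integral_times_scaled_profile:
  "integral S (\<lambda>a. k a * (p * profile \<mu> c a)) = p * integral S (\<lambda>a. k a * profile \<mu> c a)"
  using integral_cmul[of S p "\<lambda>a. k a * profile \<mu> c a"] by (simp add: algebra_simps)

lemma renewal_problem_solution:
  fixes k \<mu> x :: "real \<Rightarrow> real"
  assumes "\<mu> integrable_on {0..A}" "finite S" "\<And>a. a \<in> {0..A} - S \<Longrightarrow> continuous (at a within {0..A}) \<mu>"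
    and "k integrable_on {0..A}" "\<And>a. a \<in> {0..A} \<Longrightarrow> k a \<ge> 0" "integral {0..A} k > 0"
    and LS: "integral {0..A} (\<lambda>a. k a * profile \<mu> \<zeta> a) = 1"
    and "continuous_on {0..A} x" "finite T"
    and "\<And>a. a \<in> {0..A} - T \<Longrightarrow> (x has_real_derivative - x a * (\<mu> a + c)) (at a within {0..A})"
    and renewal: "x 0 = integral {0..A} (\<lambda>a. k a * x a)" and "x 0 \<noteq> 0"
  shows "c = \<zeta>" "\<And>a. a \<in> {0..A} \<Longrightarrow> x a = x 0 * profile \<mu> \<zeta> a"
proof -
  define p where "p = x 0"
  have x_eq: "x a = p * profile \<mu> c a" if "a \<in> {0..A}" for a
    unfolding p_def by (rule linear_ode_solution_eq_profile[OF assms(1-3,8-10) that])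
  have "p = integral {0..A} (\<lambda>a. k a * x a)"
    using renewal by (simp add: p_def)
  also have "\<dots> = integral {0..A} (\<lambda>a. k a * (p * profile \<mu> c a))"
    by (rule integral_cong) (simp add: x_eq)
  also have "\<dots> = p * integral {0..A} (\<lambda>a. k a * profile \<mu> c a)"
    by (rule integral_times_scaled_profile)
  finally have "integral {0..A} (\<lambda>a. k a * profile \<mu> c a) = integral {0..A} (\<lambda>a. k a * profile \<mu> \<zeta> a)"
    using \<open>x 0 \<noteq> 0\<close> LS by (simp add: p_def)
  from integral_profile_inj[OF assms(4-6,1) this] show "c = \<zeta>" .
  then show "x a = x 0 * profile \<mu> \<zeta> a" if "a \<in> {0..A}" for a
    using x_eq[OF that] by (simp add: p_def)
qed

locale age_structured_system =
  fixes A \<zeta>1 \<zeta>2 :: real and \<mu>1 \<mu>2 k1 k2 g1 g2 :: "real \<Rightarrow> real" and D1 D2 :: "real set"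
  assumes \<mu>1_integrable: "\<mu>1 integrable_on {0..A}" and \<mu>2_integrable: "\<mu>2 integrable_on {0..A}"
    and finite_D1: "finite D1" and finite_D2: "finite D2"
    and \<mu>1_continuous: "\<And>a. a \<in> {0..A} - D1 \<Longrightarrow> continuous (at a within {0..A}) \<mu>1"
    and \<mu>2_continuous: "\<And>a. a \<in> {0..A} - D2 \<Longrightarrow> continuous (at a within {0..A}) \<mu>2"
    and k1_integrable: "k1 integrable_on {0..A}" and k2_integrable: "k2 integrable_on {0..A}"
    and g1_integrable: "g1 integrable_on {0..A}" and g2_integrable: "g2 integrable_on {0..A}"
    and k1_nonneg: "\<And>a. a \<in> {0..A} \<Longrightarrow> k1 a \<ge> 0" and k2_nonneg: "\<And>a. a \<in> {0..A} \<Longrightarrow> k2 a \<ge> 0"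
    and g1_nonneg: "\<And>a. a \<in> {0..A} \<Longrightarrow> g1 a \<ge> 0" and g2_nonneg: "\<And>a. a \<in> {0..A} \<Longrightarrow> g2 a \<ge> 0"
    and k1_pos: "integral {0..A} k1 > 0" and k2_pos: "integral {0..A} k2 > 0"
    and g1_pos: "integral {0..A} g1 > 0" and g2_pos: "integral {0..A} g2 > 0"
    and lotka_sharpe1: "integral {0..A} (\<lambda>a. k1 a * profile \<mu>1 \<zeta>1 a) = 1"
    and lotka_sharpe2: "integral {0..A} (\<lambda>a. k2 a * profile \<mu>2 \<zeta>2 a) = 1"
begin

lemma integral_g2_profile_pos: "integral {0..A} (\<lambda>a. g2 a * profile \<mu>1 \<zeta>1 a) > 0"
  by (intro integral_nonneg_times_continuous_pos[where N = "{}"] g2_integrable g2_nonneg g2_pos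
      continuous_on_profile \<mu>1_integrable less_imp_le[OF profile_pos] profile_pos negligible_empty)

lemma integral_g1_profile_pos: "integral {0..A} (\<lambda>a. g1 a * profile \<mu>2 \<zeta>2 a) > 0"
  by (intro integral_nonneg_times_continuous_pos[where N = "{}"] g1_integrable g1_nonneg g1_pos
      continuous_on_profile \<mu>2_integrable less_imp_le[OF profile_pos] profile_pos negligible_empty)

lemma steady_state_exists:
  assumes x10_def: "x10 = 1 / ((\<zeta>2 - u) * integral {0..A} (\<lambda>a. g2 a * profile \<mu>1 \<zeta>1 a))"
    and x20_def: "x20 = (\<zeta>1 - u) / integral {0..A} (\<lambda>a. g1 a * profile \<mu>2 \<zeta>2 a)"
    and x1_def: "x1 = (\<lambda>a. x10 * profile \<mu>1 \<zeta>1 a)" and x2_def: "x2 = (\<lambda>a. x20 * profile \<mu>2 \<zeta>2 a)"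
    and "u < min \<zeta>1 \<zeta>2"
  shows "x10 > 0" "x20 > 0" "\<forall>a\<in>{0..A}. x1 a > 0 \<and> x2 a > 0"
    and "integral {0..A} (\<lambda>a. g2 a * x1 a) = 1 / (\<zeta>2 - u)"
    and "integral {0..A} (\<lambda>a. g1 a * x2 a) = \<zeta>1 - u"
    and "steady_state A \<mu>1 \<mu>2 k1 k2 g1 g2 u x1 x2"
proof -
  show "x10 > 0" "x20 > 0"
    using assms(5) integral_g2_profile_pos integral_g1_profile_pos
    by (simp_all add: x10_def x20_def)
  then show "\<forall>a\<in>{0..A}. x1 a > 0 \<and> x2 a > 0"
    by (simp add: x1_def x2_def profile_pos)
  show lam1: "integral {0..A} (\<lambda>a. g2 a * x1 a) = 1 / (\<zeta>2 - u)"
    and lam2: "integral {0..A} (\<lambda>a. g1 a * x2 a) = \<zeta>1 - u"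
    using integral_g2_profile_pos integral_g1_profile_pos
    by (simp_all add: x1_def x2_def x10_def x20_def integral_times_scaled_profile)
  show "steady_state A \<mu>1 \<mu>2 k1 k2 g1 g2 u x1 x2"
    unfolding steady_state_def lam1 lam2
  proof (intro conjI exI[of _ "D1 \<union> D2"] ballI)
    show "continuous_on {0..A} x1" "continuous_on {0..A} x2"
      unfolding x1_def x2_def
      by (intro continuous_intros continuous_on_profile \<mu>1_integrable \<mu>2_integrable)+
    show "finite (D1 \<union> D2)" using finite_D1 finite_D2 by simp
    show "x1 0 = integral {0..A} (\<lambda>a. k1 a * x1 a)" "x2 0 = integral {0..A} (\<lambda>a. k2 a * x2 a)"
      by (simp_all add: x1_def x2_def integral_times_scaled_profile lotka_sharpe1 lotka_sharpe2)
  next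
    fix a assume a: "a \<in> {0..A} - (D1 \<union> D2)"
    show "(x1 has_real_derivative - x1 a * (\<mu>1 a + u + (\<zeta>1 - u))) (at a within {0..A})"
      using DERIV_cmult[OF has_real_derivative_profile[OF \<mu>1_integrable _ \<mu>1_continuous, of a \<zeta>1], of x10] a
      by (simp add: x1_def algebra_simps)
    show "(x2 has_real_derivative - x2 a * (\<mu>2 a + u + 1 / (1 / (\<zeta>2 - u)))) (at a within {0..A})"
      using DERIV_cmult[OF has_real_derivative_profile[OF \<mu>2_integrable _ \<mu>2_continuous, of a \<zeta>2], of x20] a
      by (simp add: x2_def algebra_simps)
  qed
qed

lemma steady_state_unique:
  assumes steady: "steady_state A \<mu>1 \<mu>2 k1 k2 g1 g2 u x1 x2"
    and positive: "\<forall>a\<in>{0..A}. x1 a > 0 \<and> x2 a > 0" and "A \<ge> 0"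
  shows "u < min \<zeta>1 \<zeta>2"
    and "\<And>a. a \<in> {0..A} \<Longrightarrow>
      x1 a = 1 / ((\<zeta>2 - u) * integral {0..A} (\<lambda>a. g2 a * profile \<mu>1 \<zeta>1 a)) * profile \<mu>1 \<zeta>1 a"
    and "\<And>a. a \<in> {0..A} \<Longrightarrow>
      x2 a = (\<zeta>1 - u) / integral {0..A} (\<lambda>a. g1 a * profile \<mu>2 \<zeta>2 a) * profile \<mu>2 \<zeta>2 a"
proof -
  define lam1 where "lam1 = integral {0..A} (\<lambda>a. g2 a * x1 a)"
  define lam2 where "lam2 = integral {0..A} (\<lambda>a. g1 a * x2 a)"
  obtain S where "finite S"
    and x1': "\<And>a. a \<in> {0..A} - S \<Longrightarrow> (x1 has_real_derivative - x1 a * (\<mu>1 a + (u + lam2))) (at a within {0..A})"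
    and x2': "\<And>a. a \<in> {0..A} - S \<Longrightarrow> (x2 has_real_derivative - x2 a * (\<mu>2 a + (u + 1 / lam1))) (at a within {0..A})"
    using steady unfolding steady_state_def lam1_def lam2_def by (auto simp: add.assoc)
  have "continuous_on {0..A} x1" "continuous_on {0..A} x2"
    and "x1 0 = integral {0..A} (\<lambda>a. k1 a * x1 a)" "x2 0 = integral {0..A} (\<lambda>a. k2 a * x2 a)"
    using steady unfolding steady_state_def by auto
  moreover have "x1 0 \<noteq> 0" "x2 0 \<noteq> 0"
    using positive \<open>A \<ge> 0\<close> by (auto dest: less_imp_neq[symmetric])
  ultimately have rate1: "u + lam2 = \<zeta>1" and x1_eq: "\<And>a. a \<in> {0..A} \<Longrightarrow> x1 a = x1 0 * profile \<mu>1 \<zeta>1 a"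
    and rate2: "u + 1 / lam1 = \<zeta>2" and x2_eq: "\<And>a. a \<in> {0..A} \<Longrightarrow> x2 a = x2 0 * profile \<mu>2 \<zeta>2 a"
    using renewal_problem_solution[OF \<mu>1_integrable finite_D1 \<mu>1_continuous k1_integrable k1_nonneg k1_pos
        lotka_sharpe1 _ \<open>finite S\<close> x1']
      renewal_problem_solution[OF \<mu>2_integrable finite_D2 \<mu>2_continuous k2_integrable k2_nonneg k2_pos
        lotka_sharpe2 _ \<open>finite S\<close> x2']
    by auto
  have "lam1 > 0"
    unfolding lam1_def using positive \<open>continuous_on {0..A} x1\<close>
    by (intro integral_nonneg_times_continuous_pos[where N = "{}"] g2_integrable g2_nonneg g2_pos)
       (auto intro: less_imp_le)
  have "lam2 > 0"
    unfolding lam2_def using positive \<open>continuous_on {0..A} x2\<close>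
    by (intro integral_nonneg_times_continuous_pos[where N = "{}"] g1_integrable g1_nonneg g1_pos)
       (auto intro: less_imp_le)
  have "lam1 = x1 0 * integral {0..A} (\<lambda>a. g2 a * profile \<mu>1 \<zeta>1 a)"
    unfolding lam1_def integral_times_scaled_profile[symmetric] by (rule integral_cong) (metis x1_eq)
  with rate2 \<open>lam1 > 0\<close> integral_g2_profile_pos
  have "x1 0 = 1 / ((\<zeta>2 - u) * integral {0..A} (\<lambda>a. g2 a * profile \<mu>1 \<zeta>1 a))"
    by (auto simp: field_simps)
  then show "x1 a = 1 / ((\<zeta>2 - u) * integral {0..A} (\<lambda>a. g2 a * profile \<mu>1 \<zeta>1 a)) * profile \<mu>1 \<zeta>1 a"
    if "a \<in> {0..A}" for a
    using x1_eq[OF that] by simp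
  have "lam2 = x2 0 * integral {0..A} (\<lambda>a. g1 a * profile \<mu>2 \<zeta>2 a)"
    unfolding lam2_def integral_times_scaled_profile[symmetric] by (rule integral_cong) (metis x2_eq)
  with rate1 integral_g1_profile_pos
  have "x2 0 = (\<zeta>1 - u) / integral {0..A} (\<lambda>a. g1 a * profile \<mu>2 \<zeta>2 a)"
    by (auto simp: field_simps)
  then show "x2 a = (\<zeta>1 - u) / integral {0..A} (\<lambda>a. g1 a * profile \<mu>2 \<zeta>2 a) * profile \<mu>2 \<zeta>2 a"
    if "a \<in> {0..A}" for a
    using x2_eq[OF that] by simp
  show "u < min \<zeta>1 \<zeta>2"
    using rate1 rate2 \<open>lam1 > 0\<close> \<open>lam2 > 0\<close> by auto
qed

end

theorem proposition1:
  fixes A \<zeta>1 \<zeta>2 :: real and \<mu>1 \<mu>2 k1 k2 g1 g2 :: "real \<Rightarrow> real"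
  assumes A: "A > 0"
    and pc: "piecewise_cont A \<mu>1" "piecewise_cont A \<mu>2" "piecewise_cont A k1"
            "piecewise_cont A k2" "piecewise_cont A g1" "piecewise_cont A g2"
    and nn: "\<forall>a\<in>{0..A}. \<mu>1 a \<ge> 0 \<and> \<mu>2 a \<ge> 0 \<and> k1 a \<ge> 0 \<and> k2 a \<ge> 0 \<and> g1 a \<ge> 0 \<and> g2 a \<ge> 0"
    and pos: "integral {0..A} \<mu>1 > 0" "integral {0..A} \<mu>2 > 0"
             "integral {0..A} k1 > 0" "integral {0..A} k2 > 0"
             "integral {0..A} g1 > 0" "integral {0..A} g2 > 0"
    and LS1: "integral {0..A} (\<lambda>a. k1 a * exp (- integral {0..a} (\<lambda>s. \<mu>1 s + \<zeta>1))) = 1"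
    and LS2: "integral {0..A} (\<lambda>a. k2 a * exp (- integral {0..a} (\<lambda>s. \<mu>2 s + \<zeta>2))) = 1"
  shows
    "(\<forall>u. 0 < u \<and> u < min \<zeta>1 \<zeta>2 \<longrightarrow>
        (let x10 = 1 / ((\<zeta>2 - u) * integral {0..A} (\<lambda>a. g2 a * profile \<mu>1 \<zeta>1 a));
             x20 = (\<zeta>1 - u) / integral {0..A} (\<lambda>a. g1 a * profile \<mu>2 \<zeta>2 a);
             x1 = (\<lambda>a. x10 * profile \<mu>1 \<zeta>1 a);
             x2 = (\<lambda>a. x20 * profile \<mu>2 \<zeta>2 a);
             lam1 = integral {0..A} (\<lambda>a. g2 a * x1 a);
             lam2 = integral {0..A} (\<lambda>a. g1 a * x2 a)
         in x10 > 0 \<and> x20 > 0 \<and>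
            steady_state A \<mu>1 \<mu>2 k1 k2 g1 g2 u x1 x2 \<and>
            (\<forall>a\<in>{0..A}. x1 a > 0 \<and> x2 a > 0) \<and>
            lam1 > 0 \<and> lam2 > 0 \<and> u = \<zeta>1 - lam2 \<and> u = \<zeta>2 - 1 / lam1))
     \<and>
     (\<forall>u x1 x2. u > 0 \<and> steady_state A \<mu>1 \<mu>2 k1 k2 g1 g2 u x1 x2 \<and>
        (\<forall>a\<in>{0..A}. x1 a > 0 \<and> x2 a > 0) \<longrightarrow>
        u < min \<zeta>1 \<zeta>2 \<and>
        (\<forall>a\<in>{0..A}.
           x1 a = 1 / ((\<zeta>2 - u) * integral {0..A} (\<lambda>a. g2 a * profile \<mu>1 \<zeta>1 a)) * profile \<mu>1 \<zeta>1 a \<and>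
           x2 a = (\<zeta>1 - u) / integral {0..A} (\<lambda>a. g1 a * profile \<mu>2 \<zeta>2 a) * profile \<mu>2 \<zeta>2 a))"
proof -
  obtain D1 D2 where D: "finite D1" "finite D2"
    and "\<And>a. a \<in> {0..A} - D1 \<Longrightarrow> continuous (at a within {0..A}) \<mu>1"
    and "\<And>a. a \<in> {0..A} - D2 \<Longrightarrow> continuous (at a within {0..A}) \<mu>2"
    using pc(1,2) unfolding piecewise_cont_def by meson
  moreover have "integral {0..A} (\<lambda>a. k1 a * profile \<mu>1 \<zeta>1 a) = 1"
    and "integral {0..A} (\<lambda>a. k2 a * profile \<mu>2 \<zeta>2 a) = 1"
    using LS1 LS2 by (simp_all add: profile_def add.commute)
  ultimately interpret age_structured_system A \<zeta>1 \<zeta>2 \<mu>1 \<mu>2 k1 k2 g1 g2 D1 D2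
    using nn pos integrable_of_integral_pos by unfold_locales auto
  show ?thesis
    unfolding Let_def
    using steady_state_exists[OF refl refl refl refl] steady_state_unique[OF _ _ less_imp_le[OF A]]
    by auto
qed

end
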